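(* Let $\mathcal A$ be a cluster algebra. The map $\phi:H\mapsto\mathcal M^H_{sub}$, restricted to the set of subgroups $H\le\mathrm{Aut}\,\mathcal A$ with $\mathcal M^H_{sub}\neq\emptyset$, is injective.
   Context: $\mathrm{Aut}\,\mathcal A$: group of cluster automorphisms. Cluster subalgebras $\mathcal A(\Sigma')$ arise from mixing-type sub-seeds of seeds of $\mathcal A$ (delete some variables, freeze some exchange variables, with zero matrix entries between deleted variables and remaining exchange variables). $\mathrm{Gal}_{\Sigma'}\mathcal A=\{f\in\mathrm{Aut}\,\mathcal A: f|_{\mathcal A(\Sigma')}=\mathrm{id}\}$; $\mathcal A^H=\{z\in\mathcal A: f(z)=z\ \forall f\in H\}$; $\mathcal M^H_{sub}$ is the set of cluster subalgebras $\mathcal A(\Sigma')$ maximal (under inclusion) among cluster subalgebras contained in $\mathcal A^H$ and satisfying $\mathrm{Gal}_{\Sigma'}\mathcal A=H$. *)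

theory Defs
  imports Main "HOL-Library.FuncSet" "HOL-Algebra.Group"
begin

text \<open>A seed inside an ambient field 'a: exchangeable indices, frozen indices,
  cluster variables (elements of the ambient field) and the extended exchange
  matrix (rows: all indices, columns: exchangeable indices).\<close>

record 'a seed =
  ex  :: "nat set"
  fr  :: "nat set"
  cv  :: "nat \<Rightarrow> 'a"
  mat :: "nat \<Rightarrow> nat \<Rightarrow> int"

definition idx :: "('a, 'b) seed_scheme \<Rightarrow> nat set" where
  "idx S = ex S \<union> fr S"

definition mut :: "nat \<Rightarrow> 'a::field seed \<Rightarrow> 'a seed" where
  "mut k S = S\<lparr>
     cv := (cv S)(k := ((\<Prod>i\<in>idx S. cv S i ^ nat (max (mat S i k) 0))
                       + (\<Prod>i\<in>idx S. cv S i ^ nat (max (- mat S i k) 0))) / cv S k),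
     mat := (\<lambda>i j. if i = k \<or> j = k then - mat S i j
                   else mat S i j + (\<bar>mat S i k\<bar> * mat S k j + mat S i k * \<bar>mat S k j\<bar>) div 2)\<rparr>"

definition mut_step :: "'a::field seed \<Rightarrow> 'a seed \<Rightarrow> bool" where
  "mut_step S T \<longleftrightarrow> (\<exists>k\<in>ex S. T = mut k S)"

definition seeds :: "'a::field seed \<Rightarrow> 'a seed set" where
  "seeds S = {T. mut_step\<^sup>*\<^sup>* S T}"

inductive_set ring_gen :: "'a::comm_ring_1 set \<Rightarrow> 'a set" for G :: "'a set" where
  one: "1 \<in> ring_gen G"
| gen: "g \<in> G \<Longrightarrow> g \<in> ring_gen G"
| add: "a \<in> ring_gen G \<Longrightarrow> b \<in> ring_gen G \<Longrightarrow> a + b \<in> ring_gen G"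
| diff: "a \<in> ring_gen G \<Longrightarrow> b \<in> ring_gen G \<Longrightarrow> a - b \<in> ring_gen G"
| mult: "a \<in> ring_gen G \<Longrightarrow> b \<in> ring_gen G \<Longrightarrow> a * b \<in> ring_gen G"

definition clalg :: "'a::field seed \<Rightarrow> 'a set" where
  "clalg S = ring_gen {cv T i | T i. T \<in> seeds S \<and> i \<in> idx T}"

definition alg_indep :: "nat set \<Rightarrow> (nat \<Rightarrow> 'a::field) \<Rightarrow> bool" where
  "alg_indep X x \<longleftrightarrow>
     (\<forall>M c. finite M \<and> (\<forall>m\<in>M. \<forall>i. i \<notin> X \<longrightarrow> m i = 0)
        \<and> (\<Sum>m\<in>M. of_int (c m) * (\<Prod>i\<in>X. x i ^ m i)) = 0
        \<longrightarrow> (\<forall>m\<in>M. c m = (0::int)))"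

definition sign_skew_symmetric :: "(nat \<Rightarrow> nat \<Rightarrow> int) \<Rightarrow> nat set \<Rightarrow> bool" where
  "sign_skew_symmetric B X \<longleftrightarrow>
     (\<forall>i\<in>X. \<forall>j\<in>X. (B i j = 0 \<and> B j i = 0) \<or> B i j * B j i < 0)"

definition valid_seed :: "'a::field seed \<Rightarrow> bool" where
  "valid_seed S \<longleftrightarrow> finite (idx S) \<and> ex S \<inter> fr S = {}
     \<and> inj_on (cv S) (idx S) \<and> alg_indep (idx S) (cv S)
     \<and> (\<forall>T\<in>seeds S. sign_skew_symmetric (mat T) (ex T))"

definition cluster_aut :: "'a::field seed \<Rightarrow> ('a \<Rightarrow> 'a) set" where
  "cluster_aut S0 = {f. f \<in> extensional (clalg S0) \<and> bij_betw f (clalg S0) (clalg S0)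
     \<and> f 1 = 1
     \<and> (\<forall>a\<in>clalg S0. \<forall>b\<in>clalg S0. f (a + b) = f a + f b \<and> f (a * b) = f a * f b)
     \<and> (\<exists>S\<in>seeds S0. \<exists>T\<in>seeds S0. \<exists>\<sigma>.
          bij_betw \<sigma> (ex S) (ex T) \<and> bij_betw \<sigma> (fr S) (fr T)
          \<and> (\<forall>i\<in>idx S. f (cv S i) = cv T (\<sigma> i))
          \<and> (\<forall>k\<in>ex S. f (cv (mut k S) k) = cv (mut (\<sigma> k) T) (\<sigma> k)))}"

definition AutG :: "'a::field seed \<Rightarrow> ('a \<Rightarrow> 'a) monoid" where
  "AutG S0 = \<lparr>carrier = cluster_aut S0,
              mult = (\<lambda>f g. compose (clalg S0) f g),
              one = restrict id (clalg S0)\<rparr>"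

definition mixing_subseed :: "'a::field seed \<Rightarrow> 'a seed \<Rightarrow> bool" where
  "mixing_subseed S S' \<longleftrightarrow> (\<exists>I0 I1. I0 \<subseteq> ex S \<and> I1 \<subseteq> idx S \<and> I0 \<inter> I1 = {}
      \<and> (\<forall>i\<in>I1. \<forall>j\<in>ex S - (I0 \<union> I1). mat S i j = 0)
      \<and> S' = \<lparr>ex = ex S - (I0 \<union> I1), fr = (fr S - I1) \<union> I0, cv = cv S, mat = mat S\<rparr>)"

definition cluster_subalgebras :: "'a::field seed \<Rightarrow> 'a set set" where
  "cluster_subalgebras S0 =
     {clalg S' | S S'. S \<in> seeds S0 \<and> mixing_subseed S S'}"

definition Gal :: "'a::field seed \<Rightarrow> 'a set \<Rightarrow> ('a \<Rightarrow> 'a) set" where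
  "Gal S0 C = {f \<in> cluster_aut S0. \<forall>z\<in>C. f z = z}"

definition fixed_alg :: "'a::field seed \<Rightarrow> ('a \<Rightarrow> 'a) set \<Rightarrow> 'a set" where
  "fixed_alg S0 H = {z \<in> clalg S0. \<forall>f\<in>H. f z = z}"

definition Msub :: "'a::field seed \<Rightarrow> ('a \<Rightarrow> 'a) set \<Rightarrow> 'a set set" where
  "Msub S0 H = {C \<in> cluster_subalgebras S0. C \<subseteq> fixed_alg S0 H \<and> Gal S0 C = H
      \<and> (\<forall>C'\<in>cluster_subalgebras S0. C' \<subseteq> fixed_alg S0 H \<and> Gal S0 C' = H \<and> C \<subseteq> C'
            \<longrightarrow> C' = C)}"

end

theory Submission
  imports Defs
begin

text \<open>Every member C of Msub S0 H recovers H as its Galois group Gal S0 C, so H is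
  determined by any single element of Msub S0 H.\<close>

lemma Gal_eq_if_in_Msub:
  assumes "C \<in> Msub S0 H"
  shows "Gal S0 C = H"
  using assms unfolding Msub_def by blast

lemma Msub_inj_on_nonempty:
  "inj_on (Msub S0) {H. Msub S0 H \<noteq> {}}"
proof (rule inj_onI)
  fix H1 H2
  assume "H1 \<in> {H. Msub S0 H \<noteq> {}}" and same: "Msub S0 H1 = Msub S0 H2"
  then obtain C where C: "C \<in> Msub S0 H1" by blast
  have "H1 = Gal S0 C" using C by (rule Gal_eq_if_in_Msub [symmetric])
  also have "\<dots> = H2" using C same by (simp add: Gal_eq_if_in_Msub)
  finally show "H1 = H2" .
qed

theorem mainTheorem10:
  fixes S0 :: "'a::field seed"
  assumes "valid_seed S0"
  shows "inj_on (Msub S0) {H. subgroup H (AutG S0) \<and> Msub S0 H \<noteq> {}}"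
  by (rule inj_on_subset [OF Msub_inj_on_nonempty]) blast

end
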